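(* Let $R$ be a unital ring, let $S\subseteq R$ be a subring with $1\in S$, and let $m,n\in\mathbb{N}$. (1) If $1\in\Sigma^m\big(S\cdot\big[[S,S]_1,[S,S]_1\big]_1\big)$, then $R=\Sigma^m\big([R,R]_1+[R,R]_1\cdot[R,R]_1\big)$. In particular, if there exist $a\in S$ and $u,v\in[S,S]_1$ with $1=a[u,v]$, then $R=[R,R]_1+[R,R]_1\cdot[R,R]_1$. (2) If $1\in\Sigma^n\big(S\cdot\big[[S,S]_1,[S,S]_1^{\cdot 2}\big]_1\big)$, then $\xi(R)\leq 3n$. In particular, if there exist $a\in S$ and $u,v,w\in[S,S]_1$ with $1=a[u,vw]$, then $\xi(R)\leq 3$.
   Context: $[x,y]=xy-yx$. For subsets $X,Y$ of a ring: $[X,Y]_1=\{[x,y]:x\in X,y\in Y\}$; $X\cdot Y=\{xy:x\in X,y\in Y\}$, $X^{\cdot 2}=X\cdot X$; $X+Y=\{x+y\}$; $\Sigma^k X=\{x_1+\dots+x_k:x_i\in X\}$. For a unital ring $T$ generated by its commutators, $\xi(T)$ is the minimal $N$ such that $T=\Sigma^N\big([T,T]_1\cdot[T,T]_1\big)$, i.e. every element is a sum of $N$ elements $[b,c][d,e]$. *)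

theory Defs
  imports Main
begin

definition commutator :: "'a::ring_1 \<Rightarrow> 'a \<Rightarrow> 'a" where
  "commutator x y = x * y - y * x"

definition comm_set :: "'a::ring_1 set \<Rightarrow> 'a set \<Rightarrow> 'a set" where
  "comm_set X Y = {commutator x y | x y. x \<in> X \<and> y \<in> Y}"

definition set_mul :: "'a::ring_1 set \<Rightarrow> 'a set \<Rightarrow> 'a set" where
  "set_mul X Y = {x * y | x y. x \<in> X \<and> y \<in> Y}"

definition set_add :: "'a::ring_1 set \<Rightarrow> 'a set \<Rightarrow> 'a set" where
  "set_add X Y = {x + y | x y. x \<in> X \<and> y \<in> Y}"

definition sigma_k :: "nat \<Rightarrow> 'a::ring_1 set \<Rightarrow> 'a set" where
  "sigma_k k X = {sum_list xs | xs. length xs = k \<and> set xs \<subseteq> X}"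

definition unital_subring :: "'a::ring_1 set \<Rightarrow> bool" where
  "unital_subring S \<longleftrightarrow> 1 \<in> S \<and> 0 \<in> S \<and>
     (\<forall>x\<in>S. \<forall>y\<in>S. x + y \<in> S \<and> x * y \<in> S) \<and> (\<forall>x\<in>S. - x \<in> S)"

definition xi :: "'a::ring_1 set \<Rightarrow> nat" where
  "xi T = (LEAST N. T = sigma_k N (set_mul (comm_set T T) (comm_set T T)))"

end

theory Submission
  imports Defs
begin

text \<open>For u \<in> [R,R] the Leibniz rule gives
  b [u,v] = [bu,v] + [v,b] u   and   b [u,vw] = [bu,v] w + v [bu,w] + [vw,b] u,
so every left multiple of a summand a [u,v] (resp. a [u,vw]) with u, v, w \<in> [S,S] lies in
[R,R] + [R,R] [R,R] (resp. in a sum of three products of two commutators).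
Multiplying a representation of 1 on the left by an arbitrary x and expanding each summand
in this way represents x with the same number of summands.\<close>

lemma sum_list_in_sigma_k: "set xs \<subseteq> X \<Longrightarrow> sum_list xs \<in> sigma_k (length xs) X"
  unfolding sigma_k_def by blast

lemma sigma_k_Suc_0 [simp]: "sigma_k (Suc 0) X = X"
proof
  show "sigma_k (Suc 0) X \<subseteq> X"
    unfolding sigma_k_def length_Suc_conv by auto
  show "X \<subseteq> sigma_k (Suc 0) X"
    using sum_list_in_sigma_k[of "[x]" X for x] by auto
qed

lemma sigma_k_add:
  assumes "a \<in> sigma_k p X" and "b \<in> sigma_k q X"
  shows "a + b \<in> sigma_k (p + q) X"
proof -
  obtain as bs where "length as = p" "set as \<subseteq> X" "a = sum_list as"
    and "length bs = q" "set bs \<subseteq> X" "b = sum_list bs"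
    using assms unfolding sigma_k_def by blast
  then show ?thesis
    using sum_list_in_sigma_k[of "as @ bs" X] by simp
qed

lemma sum_list_in_sigma_k_mult:
  "set xs \<subseteq> sigma_k k X \<Longrightarrow> sum_list xs \<in> sigma_k (k * length xs) X"
proof (induction xs)
  case Nil
  show ?case
    using sum_list_in_sigma_k[of "[]" X] by simp
next
  case (Cons x xs)
  then show ?case
    using sigma_k_add[of x k X "sum_list xs" "k * length xs"] by simp
qed

lemma sigma_k_sigma_k_subset: "sigma_k n (sigma_k k X) \<subseteq> sigma_k (k * n) X"
  unfolding sigma_k_def[of n] using sum_list_in_sigma_k_mult by blast

lemma mult_left_in_sigma_k:
  assumes "s \<in> sigma_k m X" and "\<And>t. t \<in> X \<Longrightarrow> x * t \<in> Y"
  shows "x * s \<in> sigma_k m Y"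
proof -
  obtain ts where ts: "length ts = m" "set ts \<subseteq> X" "s = sum_list ts"
    using assms(1) unfolding sigma_k_def by blast
  have "x * s = sum_list (map ((*) x) ts)"
    using ts(3) by (simp add: sum_list_const_mult)
  moreover have "set (map ((*) x) ts) \<subseteq> Y"
    using ts(2) assms(2) by auto
  ultimately show ?thesis
    using sum_list_in_sigma_k[of "map ((*) x) ts" Y] ts(1) by simp
qed

lemma UNIV_eq_sigma_k_if_one_in_sigma_k:
  assumes "(1 :: 'a::ring_1) \<in> sigma_k m X" and "\<And>x t. t \<in> X \<Longrightarrow> x * t \<in> Y"
  shows "(UNIV :: 'a set) = sigma_k m Y"
proof -
  have "x \<in> sigma_k m Y" for x :: 'a
    using mult_left_in_sigma_k[OF assms(1), of x Y] assms(2) by simp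
  then show ?thesis
    by blast
qed

lemma commutator_in_comm_set: "x \<in> X \<Longrightarrow> y \<in> Y \<Longrightarrow> commutator x y \<in> comm_set X Y"
  unfolding comm_set_def by blast

lemma mult_in_set_mul: "x \<in> X \<Longrightarrow> y \<in> Y \<Longrightarrow> x * y \<in> set_mul X Y"
  unfolding set_mul_def by blast

lemma add_in_set_add: "x \<in> X \<Longrightarrow> y \<in> Y \<Longrightarrow> x + y \<in> set_add X Y"
  unfolding set_add_def by blast

lemma set_mulE:
  assumes "z \<in> set_mul X Y"
  obtains x y where "z = x * y" "x \<in> X" "y \<in> Y"
  using assms unfolding set_mul_def by blast

lemma comm_setE:
  assumes "z \<in> comm_set X Y"
  obtains x y where "z = commutator x y" "x \<in> X" "y \<in> Y"
  using assms unfolding comm_set_def by blast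

lemma comm_set_mono: "A \<subseteq> A' \<Longrightarrow> B \<subseteq> B' \<Longrightarrow> comm_set A B \<subseteq> comm_set A' B'"
  unfolding comm_set_def by blast

lemma mult_commutator_eq:
  "(b :: 'a::ring_1) * commutator u v = commutator (b * u) v + commutator v b * u"
  unfolding commutator_def by (simp add: algebra_simps)

lemma mult_commutator_mult_eq:
  "(b :: 'a::ring_1) * commutator u (v * w) =
     commutator (b * u) v * w + v * commutator (b * u) w + commutator (v * w) b * u"
  unfolding commutator_def by (simp add: algebra_simps)

lemma mult_commutator_in_comm_plus_comm_mult_comm:
  assumes "u \<in> comm_set UNIV UNIV"
  shows "(b :: 'a::ring_1) * commutator u v
    \<in> set_add (comm_set UNIV UNIV) (set_mul (comm_set UNIV UNIV) (comm_set UNIV UNIV))"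
  unfolding mult_commutator_eq
  by (intro add_in_set_add mult_in_set_mul commutator_in_comm_set UNIV_I assms)

lemma mult_commutator_mult_in_sigma_3:
  assumes "u \<in> comm_set UNIV UNIV" "v \<in> comm_set UNIV UNIV" "w \<in> comm_set UNIV UNIV"
  shows "(b :: 'a::ring_1) * commutator u (v * w)
    \<in> sigma_k 3 (set_mul (comm_set UNIV UNIV) (comm_set UNIV UNIV))"
proof -
  let ?summands = "[commutator (b * u) v * w, v * commutator (b * u) w, commutator (v * w) b * u]"
  have "set ?summands \<subseteq> set_mul (comm_set UNIV UNIV) (comm_set UNIV UNIV)"
    by (simp add: mult_in_set_mul commutator_in_comm_set UNIV_I assms)
  then show ?thesis
    unfolding mult_commutator_mult_eq
    using sum_list_in_sigma_k[of ?summands] by (simp add: numeral_3_eq_3 add.assoc)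
qed

lemma xi_UNIV_le:
  "(UNIV :: 'a::ring_1 set) = sigma_k N (set_mul (comm_set UNIV UNIV) (comm_set UNIV UNIV))
    \<Longrightarrow> xi (UNIV :: 'a set) \<le> N"
  unfolding xi_def by (rule Least_le) simp

lemma UNIV_eq_sigma_k_comm_plus_comm_mult_comm:
  assumes "(1 :: 'a::ring_1) \<in> sigma_k m (set_mul S (comm_set (comm_set S S) (comm_set S S)))"
  shows "(UNIV :: 'a set) = sigma_k m (set_add (comm_set UNIV UNIV)
    (set_mul (comm_set UNIV UNIV) (comm_set UNIV UNIV)))"
proof (rule UNIV_eq_sigma_k_if_one_in_sigma_k[OF assms])
  fix x t
  assume "t \<in> set_mul S (comm_set (comm_set S S) (comm_set S S))"
  then obtain a c where "t = a * c" and "c \<in> comm_set (comm_set S S) (comm_set S S)"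
    by (rule set_mulE)
  then obtain u v where t: "t = a * commutator u v" and "u \<in> comm_set S S"
    by (metis comm_setE)
  then have "u \<in> comm_set UNIV UNIV"
    using comm_set_mono[of S UNIV S UNIV] by blast
  then show "x * t
      \<in> set_add (comm_set UNIV UNIV) (set_mul (comm_set UNIV UNIV) (comm_set UNIV UNIV))"
    using mult_commutator_in_comm_plus_comm_mult_comm[of u "x * a" v] t by (simp add: mult.assoc)
qed

lemma xi_UNIV_le_three_mult:
  assumes "(1 :: 'a::ring_1) \<in> sigma_k n
    (set_mul S (comm_set (comm_set S S) (set_mul (comm_set S S) (comm_set S S))))"
  shows "xi (UNIV :: 'a set) \<le> 3 * n"
proof (rule xi_UNIV_le)
  let ?P = "set_mul (comm_set (UNIV :: 'a set) UNIV) (comm_set UNIV UNIV)"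
  have "(UNIV :: 'a set) = sigma_k n (sigma_k 3 ?P)"
  proof (rule UNIV_eq_sigma_k_if_one_in_sigma_k[OF assms])
    fix x t
    assume "t \<in> set_mul S (comm_set (comm_set S S) (set_mul (comm_set S S) (comm_set S S)))"
    then obtain a c where "t = a * c"
      and "c \<in> comm_set (comm_set S S) (set_mul (comm_set S S) (comm_set S S))"
      by (rule set_mulE)
    then obtain u d where "t = a * commutator u d" "u \<in> comm_set S S"
      and "d \<in> set_mul (comm_set S S) (comm_set S S)"
      by (metis comm_setE)
    then obtain v w where t: "t = a * commutator u (v * w)"
      and "u \<in> comm_set S S" "v \<in> comm_set S S" "w \<in> comm_set S S"
      by (metis set_mulE)
    then have "u \<in> comm_set UNIV UNIV" "v \<in> comm_set UNIV UNIV" "w \<in> comm_set UNIV UNIV"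
      using comm_set_mono[of S UNIV S UNIV] by blast+
    then show "x * t \<in> sigma_k 3 ?P"
      using mult_commutator_mult_in_sigma_3[of u v w "x * a"] t by (simp add: mult.assoc)
  qed
  then show "(UNIV :: 'a set) = sigma_k (3 * n) ?P"
    using sigma_k_sigma_k_subset[of n 3 ?P] by blast
qed

lemma UNIV_eq_comm_plus_comm_mult_comm:
  assumes "a \<in> S" "u \<in> comm_set S S" "v \<in> comm_set S S"
    and "(1 :: 'a::ring_1) = a * commutator u v"
  shows "(UNIV :: 'a set) =
    set_add (comm_set UNIV UNIV) (set_mul (comm_set UNIV UNIV) (comm_set UNIV UNIV))"
proof -
  have "a * commutator u v \<in> set_mul S (comm_set (comm_set S S) (comm_set S S))"
    using assms(1-3) by (intro mult_in_set_mul commutator_in_comm_set)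
  then have "1 \<in> sigma_k 1 (set_mul S (comm_set (comm_set S S) (comm_set S S)))"
    by (simp add: assms(4))
  from UNIV_eq_sigma_k_comm_plus_comm_mult_comm[OF this] show ?thesis
    by simp
qed

lemma xi_UNIV_le_three:
  assumes "a \<in> S" "u \<in> comm_set S S" "v \<in> comm_set S S" "w \<in> comm_set S S"
    and "(1 :: 'a::ring_1) = a * commutator u (v * w)"
  shows "xi (UNIV :: 'a set) \<le> 3"
proof -
  have "a * commutator u (v * w)
      \<in> set_mul S (comm_set (comm_set S S) (set_mul (comm_set S S) (comm_set S S)))"
    using assms(1-4) by (intro mult_in_set_mul commutator_in_comm_set)
  then have "1 \<in> sigma_k 1
      (set_mul S (comm_set (comm_set S S) (set_mul (comm_set S S) (comm_set S S))))"
    by (simp add: assms(5))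
  from xi_UNIV_le_three_mult[OF this] show ?thesis
    by simp
qed

theorem lemma5p13:
  fixes S :: "'a::ring_1 set" and m n :: nat
  assumes "unital_subring S"
  shows
   "(1 \<in> sigma_k m (set_mul S (comm_set (comm_set S S) (comm_set S S)))
       \<longrightarrow> (UNIV :: 'a set) = sigma_k m (set_add (comm_set UNIV UNIV)
              (set_mul (comm_set UNIV UNIV) (comm_set UNIV UNIV))))
    \<and> ((\<exists>a\<in>S. \<exists>u\<in>comm_set S S. \<exists>v\<in>comm_set S S. 1 = a * commutator u v)
       \<longrightarrow> (UNIV :: 'a set) = set_add (comm_set UNIV UNIV)
              (set_mul (comm_set UNIV UNIV) (comm_set UNIV UNIV)))
    \<and> (1 \<in> sigma_k n (set_mul S (comm_set (comm_set S S)
                 (set_mul (comm_set S S) (comm_set S S))))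
       \<longrightarrow> xi (UNIV :: 'a set) \<le> 3 * n)
    \<and> ((\<exists>a\<in>S. \<exists>u\<in>comm_set S S. \<exists>v\<in>comm_set S S. \<exists>w\<in>comm_set S S.
           1 = a * commutator u (v * w))
       \<longrightarrow> xi (UNIV :: 'a set) \<le> 3)"
proof (intro conjI impI, goal_cases)
  case 1
  then show ?case by (rule UNIV_eq_sigma_k_comm_plus_comm_mult_comm)
next
  case 2
  then show ?case by (metis UNIV_eq_comm_plus_comm_mult_comm)
next
  case 3
  then show ?case by (rule xi_UNIV_le_three_mult)
next
  case 4
  then show ?case by (metis xi_UNIV_le_three)
qed

end
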